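(* Let $n\ge1$. For every $(x,y,z)\in V_n$: the length of $\tau_n(xyz)\in(V_n)^*$ is $n+1-x$; the first item of $\tau_n(xyz)$ is $(0,x-y+1,n)$ or $(0,x-y+1,n+1)$; and exactly $z-x$ items of $\tau_n(xyz)$ have last coordinate equal to $n$. In particular, $\tau_n$ is injective.
   Context: $V_n=\{(v_0,v_1,v_2)\in\mathbb{Z}^3: 0\le v_0\le v_1\le 1,\ v_1\le v_2\le n+1\}$, elements written as words $v_0v_1v_2$; write $\bar n=n+1$. $\tau_n:V_n\to V_n^*$ (finite sequences over $V_n$) is defined by $\tau_n(xyz)=(0,x-y+1,n)\cdot(11n)^{z-x-1}\cdot(11\bar n)^{n+1-z}$ if $x\ne z$, and $\tau_n(xyz)=(0,x-y+1,n+1)\cdot(11\bar n)^{n-z}$ if $x=z$, where $\cdot$ is concatenation and exponents denote repetition. *)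

theory Defs
  imports Main
begin

type_synonym triple = "int \<times> int \<times> int"

definition V :: "nat \<Rightarrow> triple set" where
  "V n = {(v0, v1, v2). 0 \<le> v0 \<and> v0 \<le> v1 \<and> v1 \<le> 1 \<and> v1 \<le> v2 \<and> v2 \<le> int n + 1}"

definition tau :: "nat \<Rightarrow> triple \<Rightarrow> triple list" where
  "tau n v = (case v of (x, y, z) \<Rightarrow>
     (if x \<noteq> z then
        [(0, x - y + 1, int n)] @ replicate (nat (z - x - 1)) (1, 1, int n)
          @ replicate (nat (int n + 1 - z)) (1, 1, int n + 1)
      else
        [(0, x - y + 1, int n + 1)] @ replicate (nat (int n - z)) (1, 1, int n + 1)))"

end

theory Submission
  imports Defs
begin

text \<open>The word \<open>\<tau>\<^sub>n(xyz)\<close> records all three coordinates of \<open>xyz\<close>: its length gives \<open>x\<close>,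
  the number of letters ending in \<open>n\<close> gives \<open>z - x\<close>, and its first letter gives \<open>x - y + 1\<close>.
  Hence reading these three statistics off the word inverts \<open>\<tau>\<^sub>n\<close> on \<open>V\<^sub>n\<close>.\<close>

lemma hd_tau: "hd (tau n (x, y, z)) = (0, x - y + 1, if x = z then int n + 1 else int n)"
  by (simp add: tau_def)

lemma length_tau:
  assumes "n \<ge> 1" "(x, y, z) \<in> V n"
  shows "int (length (tau n (x, y, z))) = int n + 1 - x"
  using assms by (auto simp: V_def tau_def)

lemma length_filter_last_tau:
  assumes "(x, y, z) \<in> V n"
  shows "int (length (filter (\<lambda>(a, b, c). c = int n) (tau n (x, y, z)))) = z - x"
  using assms by (auto simp: V_def tau_def filter_replicate)

definition tau_decode :: "nat \<Rightarrow> triple list \<Rightarrow> triple" where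
  "tau_decode n w =
    (let x = int n + 1 - int (length w);
         z = x + int (length (filter (\<lambda>(a, b, c). c = int n) w))
     in (x, x + 1 - fst (snd (hd w)), z))"

lemma tau_decode_tau:
  assumes "n \<ge> 1" "v \<in> V n"
  shows "tau_decode n (tau n v) = v"
proof -
  obtain x y z where v: "v = (x, y, z)"
    by (cases v) auto
  show ?thesis
    using length_tau[OF assms(1)] length_filter_last_tau hd_tau[of n x y z] assms(2)
    by (simp add: v tau_decode_def Let_def)
qed

theorem lemma5p1:
  fixes n :: nat
  assumes "n \<ge> 1"
  shows "(\<forall>x y z. (x, y, z) \<in> V n \<longrightarrow>
            int (length (tau n (x, y, z))) = int n + 1 - x
          \<and> (hd (tau n (x, y, z)) = (0, x - y + 1, int n)
             \<or> hd (tau n (x, y, z)) = (0, x - y + 1, int n + 1))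
          \<and> int (length (filter (\<lambda>(a, b, c). c = int n) (tau n (x, y, z)))) = z - x)
         \<and> inj_on (tau n) (V n)"
proof (intro conjI allI impI)
  fix x y z
  assume xyz: "(x, y, z) \<in> V n"
  show "int (length (tau n (x, y, z))) = int n + 1 - x"
    using length_tau[OF assms xyz] .
  show "hd (tau n (x, y, z)) = (0, x - y + 1, int n)
      \<or> hd (tau n (x, y, z)) = (0, x - y + 1, int n + 1)"
    by (simp add: hd_tau)
  show "int (length (filter (\<lambda>(a, b, c). c = int n) (tau n (x, y, z)))) = z - x"
    using length_filter_last_tau[OF xyz] .
next
  show "inj_on (tau n) (V n)"
    using tau_decode_tau[OF assms] by (rule inj_on_inverseI)
qed

end
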